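(* Let $(X,\tau)$ be a $\mathbb{B}$-topological space. Then $(X,\tau)$ is d-sober if and only if every irreducible closed set $\gamma$ of $(X,\tau)$ satisfying (a) for every closed set $\mu$ of $(X,\tau)$ with $\mu(z)\neq0$ for all $z\in X$, either $tt\wedge\gamma\le\mu$ or $ff\wedge\gamma\le\mu$, and (b) for every closed set $\mu$ of $(X,\tau)$ with $\mu(z)\neq1$ for all $z\in X$, $\gamma\not\le\mu$, equals the closure $\overline{1_x}$ for a unique point $x\in X$.
   Context: $\mathbb{B}=\{0,1,tt,ff\}$ is the four-element Boolean algebra with bottom $0$, top $1$, and $tt,ff$ incomparable complements; $\neg$ is its complement, $a\to b=\neg a\vee b$. $\mathbb{B}^X$ has pointwise order/operations; $b_X$ is the constant map $b$; $1_x$ sends $x$ to $1$ and others to $0$; $(b\wedge\lambda)(x)=b\wedge\lambda(x)$; $\lambda[b]=\{x:\lambda(x)\ge b\}$. A $\mathbb{B}$-topology $\tau\subseteq\mathbb{B}^X$ contains all constants and is closed under arbitrary joins and finite meets; $\gamma$ is closed if $\neg\gamma\in\tau$; $\overline{\lambda}$ is the meet of all closed sets above $\lambda$. $(X,\tau)$ is identified with the bitopological space $(X,\tau[tt],\tau[ff])$, $\tau[b]=\{\lambda[b]:\lambda\in\tau\}$. $\mathrm{sub}_X(\lambda,\mu)=\bigwedge_x(\lambda(x)\to\mu(x))$. A closed set $\gamma$ is irreducible if $\mathrm{sub}_X(\gamma,b_X)=b$ for all $b\in\mathbb{B}$ and $\mathrm{sub}_X(\gamma,\mu_1\vee\mu_2)=\mathrm{sub}_X(\gamma,\mu_1)\vee\mathrm{sub}_X(\gamma,\mu_2)$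 for all closed $\mu_1,\mu_2$. A d-point of $(X,\tau[tt],\tau[ff])$ is a pair of frame homomorphisms $p_{tt}\colon\tau[tt]\to\{0,1\}$, $p_{ff}\colon\tau[ff]\to\{0,1\}$ such that: if $U\in\tau[tt]$, $V\in\tau[ff]$, $U\cap V=\emptyset$ then $p_{tt}(U)=0$ or $p_{ff}(V)=0$; and if $U\cup V=X$ then $p_{tt}(U)=1$ or $p_{ff}(V)=1$. Each $x$ gives the d-point $[x]$ with $[x]_{tt}(U)=1\iff x\in U$, $[x]_{ff}(V)=1\iff x\in V$. The space is d-sober if every d-point is $[x]$ for a unique $x$. *)

theory Defs
  imports Main "HOL-Library.Product_Order"
begin

text \<open>The four-element Boolean algebra B = {0,1,tt,ff}, realised as bool \<times> bool with the
componentwise order: 0 = (False,False), 1 = (True,True), tt = (True,False), ff = (False,True).\<close>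

type_synonym B4 = "bool \<times> bool"

definition tt :: B4 where "tt = (True, False)"
definition ff :: B4 where "ff = (False, True)"

definition bimp :: "B4 \<Rightarrow> B4 \<Rightarrow> B4" where "bimp a b = sup (- a) b"

text \<open>B-valued sets on the ground type 'a (X = UNIV); B^X ordered pointwise.\<close>

definition Btopology :: "('a \<Rightarrow> B4) set \<Rightarrow> bool" where
  "Btopology \<tau> \<longleftrightarrow>
     (\<forall>b. (\<lambda>_. b) \<in> \<tau>) \<and>
     (\<forall>S. S \<subseteq> \<tau> \<longrightarrow> Sup S \<in> \<tau>) \<and>
     (\<forall>l m. l \<in> \<tau> \<longrightarrow> m \<in> \<tau> \<longrightarrow> inf l m \<in> \<tau>)"

definition Bclosed :: "('a \<Rightarrow> B4) set \<Rightarrow> ('a \<Rightarrow> B4) \<Rightarrow> bool" where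
  "Bclosed \<tau> g \<longleftrightarrow> - g \<in> \<tau>"

definition Bclosure :: "('a \<Rightarrow> B4) set \<Rightarrow> ('a \<Rightarrow> B4) \<Rightarrow> ('a \<Rightarrow> B4)" where
  "Bclosure \<tau> l = Inf {g. Bclosed \<tau> g \<and> l \<le> g}"

definition Bpoint :: "'a \<Rightarrow> ('a \<Rightarrow> B4)" where
  "Bpoint x = (\<lambda>y. if y = x then top else bot)"

definition Bscal :: "B4 \<Rightarrow> ('a \<Rightarrow> B4) \<Rightarrow> ('a \<Rightarrow> B4)" where
  "Bscal b l = (\<lambda>x. inf b (l x))"

definition Bsub :: "('a \<Rightarrow> B4) \<Rightarrow> ('a \<Rightarrow> B4) \<Rightarrow> B4" where
  "Bsub l m = (INF x. bimp (l x) (m x))"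

definition Birreducible :: "('a \<Rightarrow> B4) set \<Rightarrow> ('a \<Rightarrow> B4) \<Rightarrow> bool" where
  "Birreducible \<tau> g \<longleftrightarrow> Bclosed \<tau> g \<and>
     (\<forall>b. Bsub g (\<lambda>_. b) = b) \<and>
     (\<forall>m1 m2. Bclosed \<tau> m1 \<longrightarrow> Bclosed \<tau> m2 \<longrightarrow>
        Bsub g (sup m1 m2) = sup (Bsub g m1) (Bsub g m2))"

definition Bcut :: "('a \<Rightarrow> B4) \<Rightarrow> B4 \<Rightarrow> 'a set" where
  "Bcut l b = {x. b \<le> l x}"

definition Blevel :: "('a \<Rightarrow> B4) set \<Rightarrow> B4 \<Rightarrow> 'a set set" where
  "Blevel \<tau> b = (\<lambda>l. Bcut l b) ` \<tau>"

definition frame_hom :: "'a set set \<Rightarrow> ('a set \<Rightarrow> bool) \<Rightarrow> bool" where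
  "frame_hom T p \<longleftrightarrow>
     p UNIV \<and>
     (\<forall>U V. U \<in> T \<longrightarrow> V \<in> T \<longrightarrow> p (U \<inter> V) = (p U \<and> p V)) \<and>
     (\<forall>S. S \<subseteq> T \<longrightarrow> p (\<Union>S) = (\<exists>U\<in>S. p U))"

definition d_point :: "'a set set \<Rightarrow> 'a set set \<Rightarrow> ('a set \<Rightarrow> bool) \<Rightarrow> ('a set \<Rightarrow> bool) \<Rightarrow> bool" where
  "d_point T1 T2 p1 p2 \<longleftrightarrow> frame_hom T1 p1 \<and> frame_hom T2 p2 \<and>
     (\<forall>U V. U \<in> T1 \<longrightarrow> V \<in> T2 \<longrightarrow> U \<inter> V = {} \<longrightarrow> \<not> p1 U \<or> \<not> p2 V) \<and>
     (\<forall>U V. U \<in> T1 \<longrightarrow> V \<in> T2 \<longrightarrow> U \<union> V = UNIV \<longrightarrow> p1 U \<or> p2 V)"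

text \<open>The d-point p equals [x]: agreement on the respective topologies.\<close>

definition d_sober :: "'a set set \<Rightarrow> 'a set set \<Rightarrow> bool" where
  "d_sober T1 T2 \<longleftrightarrow> (\<forall>p1 p2. d_point T1 T2 p1 p2 \<longrightarrow>
     (\<exists>!x. (\<forall>U\<in>T1. p1 U = (x \<in> U)) \<and> (\<forall>V\<in>T2. p2 V = (x \<in> V))))"

definition B_d_sober :: "('a \<Rightarrow> B4) set \<Rightarrow> bool" where
  "B_d_sober \<tau> \<longleftrightarrow> d_sober (Blevel \<tau> tt) (Blevel \<tau> ff)"

end

theory Submission
  imports Defs
begin

text \<open>
  A \<open>\<bbbB>\<close>-valued set is the same thing as the pair of its cuts at the atoms \<open>tt\<close> and \<open>ff\<close>,
  and joins, meets and complements are computed cutwise; moreover any pair of \<open>\<tau>[tt]\<close>-open and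
  \<open>\<tau>[ff]\<close>-open sets glues to a member of \<open>\<tau>\<close>. Through this dictionary closed \<open>\<bbbB>\<close>-sets
  become pairs of closed sets, irreducibility becomes irreducibility of both cuts, conditions (a)
  and (b) become the two compatibility axioms of a d-point, and the closure of \<open>1\<^sub>x\<close> becomes
  the pair of closures of \<open>x\<close>. On the bitopological side, a frame homomorphism \<open>T \<rightarrow> {0,1}\<close> is
  \<open>U \<mapsto> (U meets C)\<close> for the irreducible closed set \<open>C\<close> complementary to the largest open set
  sent to \<open>0\<close>, and \<open>[x]\<close> corresponds to the closures of \<open>x\<close>. So both sides of the equivalence say
  that every such pair of closed sets is the pair of closures of a unique point.
\<close>

section \<open>D-sober bitopological spaces\<close>

definition is_topology :: "'a set set \<Rightarrow> bool" where
  "is_topology T \<longleftrightarrow> UNIV \<in> T \<and> (\<forall>S\<subseteq>T. \<Union>S \<in> T) \<and> (\<forall>U\<in>T. \<forall>V\<in>T. U \<inter> V \<in> T)"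

definition irreducible_closed :: "'a set set \<Rightarrow> 'a set \<Rightarrow> bool" where
  "irreducible_closed T C \<longleftrightarrow> - C \<in> T \<and> C \<noteq> {} \<and>
     (\<forall>M N. - M \<in> T \<longrightarrow> - N \<in> T \<longrightarrow> C \<subseteq> M \<union> N \<longrightarrow> C \<subseteq> M \<or> C \<subseteq> N)"

definition point_closure :: "'a set set \<Rightarrow> 'a \<Rightarrow> 'a set" where
  "point_closure T x = \<Inter>{C. - C \<in> T \<and> x \<in> C}"

text \<open>
  These pairs correspond to the d-points via \<open>p\<^sub>i U = (U \<inter> C\<^sub>i \<noteq> {})\<close>; on cuts, the last two
  clauses are conditions (a) and (b).
\<close>

definition d_irreducible_pair :: "'a set set \<Rightarrow> 'a set set \<Rightarrow> 'a set \<Rightarrow> 'a set \<Rightarrow> bool" where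
  "d_irreducible_pair T1 T2 C1 C2 \<longleftrightarrow> irreducible_closed T1 C1 \<and> irreducible_closed T2 C2 \<and>
     (\<forall>M1 M2. - M1 \<in> T1 \<longrightarrow> - M2 \<in> T2 \<longrightarrow> M1 \<union> M2 = UNIV \<longrightarrow> C1 \<subseteq> M1 \<or> C2 \<subseteq> M2) \<and>
     (\<forall>M1 M2. - M1 \<in> T1 \<longrightarrow> - M2 \<in> T2 \<longrightarrow> M1 \<inter> M2 = {} \<longrightarrow> \<not> (C1 \<subseteq> M1 \<and> C2 \<subseteq> M2))"

lemma point_closure_least: "- C \<in> T \<Longrightarrow> x \<in> C \<Longrightarrow> point_closure T x \<subseteq> C"
  unfolding point_closure_def by blast

lemma in_point_closure: "x \<in> point_closure T x"
  unfolding point_closure_def by blast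

lemma point_closure_closed:
  assumes "is_topology T"
  shows "- point_closure T x \<in> T"
proof -
  have "- point_closure T x = \<Union>{U \<in> T. x \<notin> U}"
  proof (intro equalityI subsetI)
    fix y
    assume "y \<in> - point_closure T x"
    then obtain C where "- C \<in> T" "x \<in> C" "y \<notin> C"
      unfolding point_closure_def by blast
    then show "y \<in> \<Union>{U \<in> T. x \<notin> U}"
      by blast
  next
    fix y
    assume "y \<in> \<Union>{U \<in> T. x \<notin> U}"
    then obtain U where "U \<in> T" "x \<notin> U" "y \<in> U"
      by blast
    then show "y \<in> - point_closure T x"
      using point_closure_least[of "- U" T x] by auto
  qed
  with assms show ?thesis
    unfolding is_topology_def by auto
qed

lemma open_meets_point_closure_iff:
  "U \<in> T \<Longrightarrow> U \<inter> point_closure T x \<noteq> {} \<longleftrightarrow> x \<in> U"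
  using point_closure_least[of "- U" T x] in_point_closure[of x T] by auto

lemma closed_eq_point_closure_iff:
  assumes T: "is_topology T" and C: "- C \<in> T"
  shows "(\<forall>U\<in>T. U \<inter> C \<noteq> {} \<longleftrightarrow> x \<in> U) \<longleftrightarrow> C = point_closure T x"
proof
  assume meets: "\<forall>U\<in>T. U \<inter> C \<noteq> {} \<longleftrightarrow> x \<in> U"
  have "- C \<inter> C \<noteq> {} \<longleftrightarrow> x \<in> - C"
    using meets C by (rule bspec)
  then have "x \<in> C"
    by simp
  with C have "point_closure T x \<subseteq> C"
    by (rule point_closure_least)
  moreover have "- point_closure T x \<inter> C \<noteq> {} \<longleftrightarrow> x \<in> - point_closure T x"
    using meets point_closure_closed[OF T] by (rule bspec)
  then have "C \<subseteq> point_closure T x"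
    using in_point_closure[of x T] by blast
  ultimately show "C = point_closure T x"
    by blast
qed (simp add: open_meets_point_closure_iff)

lemma frame_hom_meets_irreducible_closed:
  assumes C: "irreducible_closed T C"
  shows "frame_hom T (\<lambda>U. U \<inter> C \<noteq> {})"
proof -
  have "C \<noteq> {}" and split: "\<And>M N. - M \<in> T \<Longrightarrow> - N \<in> T \<Longrightarrow> C \<subseteq> M \<union> N \<Longrightarrow> C \<subseteq> M \<or> C \<subseteq> N"
    using C unfolding irreducible_closed_def by blast+
  have "U \<inter> V \<inter> C \<noteq> {}" if "U \<in> T" "V \<in> T" "U \<inter> C \<noteq> {}" "V \<inter> C \<noteq> {}" for U V
    using split[of "- U" "- V"] that by auto
  with \<open>C \<noteq> {}\<close> show ?thesis
    unfolding frame_hom_def by blast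
qed

lemma frame_hom_obtains_irreducible_closed:
  assumes T: "is_topology T" and p: "frame_hom T p"
  obtains C where "irreducible_closed T C" and "\<forall>U\<in>T. p U \<longleftrightarrow> U \<inter> C \<noteq> {}"
proof
  define W where "W = \<Union>{U \<in> T. \<not> p U}"
  have W: "W \<in> T"
    using T unfolding is_topology_def W_def by auto
  have not_pW: "\<not> p W"
    using p unfolding frame_hom_def W_def by auto
  show meets: "\<forall>U\<in>T. p U \<longleftrightarrow> U \<inter> - W \<noteq> {}"
  proof
    fix U
    assume U: "U \<in> T"
    have "\<not> p U" if "U \<subseteq> W"
    proof -
      have "p U = p (U \<inter> W)"
        using that by (simp add: Int_absorb2)
      with p U W not_pW show ?thesis
        unfolding frame_hom_def by blast
    qed
    moreover have "U \<subseteq> W" if "\<not> p U"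
      using that U unfolding W_def by blast
    ultimately show "p U \<longleftrightarrow> U \<inter> - W \<noteq> {}"
      by blast
  qed
  show "irreducible_closed T (- W)"
    unfolding irreducible_closed_def
  proof (intro conjI allI impI)
    show "- (- W) \<in> T" and "- W \<noteq> {}"
      using W meets T p unfolding is_topology_def frame_hom_def by auto
  next
    fix M N
    assume M: "- M \<in> T" and N: "- N \<in> T" and cover: "- W \<subseteq> M \<union> N"
    have "- M \<inter> - N \<in> T"
      using M N T unfolding is_topology_def by blast
    with cover meets have "\<not> p (- M \<inter> - N)"
      by auto
    then have "\<not> p (- M) \<or> \<not> p (- N)"
      using p M N unfolding frame_hom_def by blast
    with meets M N show "- W \<subseteq> M \<or> - W \<subseteq> N"
      by auto
  qed
qed

lemma d_point_meets_d_irreducible_pair: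
  assumes pair: "d_irreducible_pair T1 T2 C1 C2"
  shows "d_point T1 T2 (\<lambda>U. U \<inter> C1 \<noteq> {}) (\<lambda>V. V \<inter> C2 \<noteq> {})"
  unfolding d_point_def
proof (intro conjI allI impI)
  show "frame_hom T1 (\<lambda>U. U \<inter> C1 \<noteq> {})" "frame_hom T2 (\<lambda>V. V \<inter> C2 \<noteq> {})"
    using pair unfolding d_irreducible_pair_def by (simp_all add: frame_hom_meets_irreducible_closed)
next
  fix U V
  assume "U \<in> T1" "V \<in> T2"
  then have closed: "- (- U) \<in> T1" "- (- V) \<in> T2"
    by simp_all
  have "\<forall>M1 M2. - M1 \<in> T1 \<longrightarrow> - M2 \<in> T2 \<longrightarrow> M1 \<union> M2 = UNIV \<longrightarrow> C1 \<subseteq> M1 \<or> C2 \<subseteq> M2"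
    and "\<forall>M1 M2. - M1 \<in> T1 \<longrightarrow> - M2 \<in> T2 \<longrightarrow> M1 \<inter> M2 = {} \<longrightarrow> \<not> (C1 \<subseteq> M1 \<and> C2 \<subseteq> M2)"
    using pair unfolding d_irreducible_pair_def by simp_all
  note this[rule_format, OF closed]
  then show "U \<inter> V = {} \<Longrightarrow> \<not> U \<inter> C1 \<noteq> {} \<or> \<not> V \<inter> C2 \<noteq> {}"
    and "U \<union> V = UNIV \<Longrightarrow> U \<inter> C1 \<noteq> {} \<or> V \<inter> C2 \<noteq> {}"
    by blast+
qed

lemma d_point_obtains_d_irreducible_pair:
  assumes T1: "is_topology T1" and T2: "is_topology T2" and p: "d_point T1 T2 p1 p2"
  obtains C1 C2 where "d_irreducible_pair T1 T2 C1 C2"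
    and "\<forall>U\<in>T1. p1 U \<longleftrightarrow> U \<inter> C1 \<noteq> {}" and "\<forall>V\<in>T2. p2 V \<longleftrightarrow> V \<inter> C2 \<noteq> {}"
proof -
  obtain C1 where C1: "irreducible_closed T1 C1" and p1: "\<forall>U\<in>T1. p1 U \<longleftrightarrow> U \<inter> C1 \<noteq> {}"
    using frame_hom_obtains_irreducible_closed[OF T1] p unfolding d_point_def by blast
  obtain C2 where C2: "irreducible_closed T2 C2" and p2: "\<forall>V\<in>T2. p2 V \<longleftrightarrow> V \<inter> C2 \<noteq> {}"
    using frame_hom_obtains_irreducible_closed[OF T2] p unfolding d_point_def by blast
  have "d_irreducible_pair T1 T2 C1 C2"
    unfolding d_irreducible_pair_def
  proof (intro conjI allI impI C1 C2)
    fix M1 M2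
    assume M: "- M1 \<in> T1" "- M2 \<in> T2"
    have "\<forall>U V. U \<in> T1 \<longrightarrow> V \<in> T2 \<longrightarrow> U \<inter> V = {} \<longrightarrow> \<not> p1 U \<or> \<not> p2 V"
      and "\<forall>U V. U \<in> T1 \<longrightarrow> V \<in> T2 \<longrightarrow> U \<union> V = UNIV \<longrightarrow> p1 U \<or> p2 V"
      using p unfolding d_point_def by simp_all
    note separation = this[rule_format, OF M]
    have "p1 (- M1) \<longleftrightarrow> \<not> C1 \<subseteq> M1" and "p2 (- M2) \<longleftrightarrow> \<not> C2 \<subseteq> M2"
      using M p1 p2 by auto
    moreover have "- M1 \<inter> - M2 = {} \<longleftrightarrow> M1 \<union> M2 = UNIV" and "- M1 \<union> - M2 = UNIV \<longleftrightarrow> M1 \<inter> M2 = {}"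
      by auto
    ultimately show "M1 \<union> M2 = UNIV \<Longrightarrow> C1 \<subseteq> M1 \<or> C2 \<subseteq> M2"
      and "M1 \<inter> M2 = {} \<Longrightarrow> \<not> (C1 \<subseteq> M1 \<and> C2 \<subseteq> M2)"
      using separation by simp_all
  qed
  then show thesis
    using p1 p2 by (rule that)
qed

lemma d_point_eq_point_iff:
  assumes T1: "is_topology T1" and T2: "is_topology T2" and pair: "d_irreducible_pair T1 T2 C1 C2"
    and p1: "\<forall>U\<in>T1. p1 U \<longleftrightarrow> U \<inter> C1 \<noteq> {}" and p2: "\<forall>V\<in>T2. p2 V \<longleftrightarrow> V \<inter> C2 \<noteq> {}"
  shows "(\<forall>U\<in>T1. p1 U \<longleftrightarrow> x \<in> U) \<and> (\<forall>V\<in>T2. p2 V \<longleftrightarrow> x \<in> V) \<longleftrightarrow>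
    C1 = point_closure T1 x \<and> C2 = point_closure T2 x"
proof -
  have "- C1 \<in> T1" "- C2 \<in> T2"
    using pair unfolding d_irreducible_pair_def irreducible_closed_def by simp_all
  moreover have "(\<forall>U\<in>T1. p1 U \<longleftrightarrow> x \<in> U) \<longleftrightarrow> (\<forall>U\<in>T1. U \<inter> C1 \<noteq> {} \<longleftrightarrow> x \<in> U)"
    and "(\<forall>V\<in>T2. p2 V \<longleftrightarrow> x \<in> V) \<longleftrightarrow> (\<forall>V\<in>T2. V \<inter> C2 \<noteq> {} \<longleftrightarrow> x \<in> V)"
    using p1 p2 by simp_all
  ultimately show ?thesis
    by (simp only: closed_eq_point_closure_iff[OF T1] closed_eq_point_closure_iff[OF T2])
qed

theorem d_sober_iff_d_irreducible_pairs_point_closures: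
  assumes T1: "is_topology T1" and T2: "is_topology T2"
  shows "d_sober T1 T2 \<longleftrightarrow>
    (\<forall>C1 C2. d_irreducible_pair T1 T2 C1 C2 \<longrightarrow>
       (\<exists>!x. C1 = point_closure T1 x \<and> C2 = point_closure T2 x))"
proof (intro iffI allI impI)
  fix C1 C2
  assume "d_sober T1 T2" and pair: "d_irreducible_pair T1 T2 C1 C2"
  then have represented: "\<exists>!x. (\<forall>U\<in>T1. U \<inter> C1 \<noteq> {} \<longleftrightarrow> x \<in> U) \<and> (\<forall>V\<in>T2. V \<inter> C2 \<noteq> {} \<longleftrightarrow> x \<in> V)"
    unfolding d_sober_def using d_point_meets_d_irreducible_pair[OF pair] by simp
  have point_iff: "(\<forall>U\<in>T1. U \<inter> C1 \<noteq> {} \<longleftrightarrow> x \<in> U) \<and> (\<forall>V\<in>T2. V \<inter> C2 \<noteq> {} \<longleftrightarrow> x \<in> V) \<longleftrightarrow>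
    C1 = point_closure T1 x \<and> C2 = point_closure T2 x" for x
    by (rule d_point_eq_point_iff[OF T1 T2 pair]) simp_all
  from represented show "\<exists>!x. C1 = point_closure T1 x \<and> C2 = point_closure T2 x"
    by (simp only: point_iff)
next
  assume pairs: "\<forall>C1 C2. d_irreducible_pair T1 T2 C1 C2 \<longrightarrow>
    (\<exists>!x. C1 = point_closure T1 x \<and> C2 = point_closure T2 x)"
  show "d_sober T1 T2"
    unfolding d_sober_def
  proof (intro allI impI)
    fix p1 p2
    assume "d_point T1 T2 p1 p2"
    then obtain C1 C2 where pair: "d_irreducible_pair T1 T2 C1 C2"
      and p1: "\<forall>U\<in>T1. p1 U \<longleftrightarrow> U \<inter> C1 \<noteq> {}" and p2: "\<forall>V\<in>T2. p2 V \<longleftrightarrow> V \<inter> C2 \<noteq> {}"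
      using d_point_obtains_d_irreducible_pair[OF T1 T2] by blast
    show "\<exists>!x. (\<forall>U\<in>T1. p1 U \<longleftrightarrow> x \<in> U) \<and> (\<forall>V\<in>T2. p2 V \<longleftrightarrow> x \<in> V)"
      using pairs[rule_format, OF pair] by (simp only: d_point_eq_point_iff[OF T1 T2 pair p1 p2])
  qed
qed

section \<open>\<open>\<bbbB>\<close>-valued sets as pairs of sets\<close>

lemma tt_ff_simps [simp]: "fst tt" "\<not> snd tt" "\<not> fst ff" "snd ff" "- tt = ff" "- ff = tt"
  by (simp_all add: tt_def ff_def)

lemma Bcut_tt: "Bcut l tt = {x. fst (l x)}"
  by (auto simp: Bcut_def tt_def less_eq_prod_def)

lemma Bcut_ff: "Bcut l ff = {x. snd (l x)}"
  by (auto simp: Bcut_def ff_def less_eq_prod_def)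

lemma Bcut_inf: "Bcut (inf l m) b = Bcut l b \<inter> Bcut m b"
  by (auto simp: Bcut_def)

lemma Bcut_Inf: "Bcut (Inf F) b = (\<Inter>l\<in>F. Bcut l b)"
  by (auto simp: Bcut_def le_INF_iff)

lemma Bcut_top: "Bcut (\<lambda>_. top) b = UNIV"
  by (simp add: Bcut_def)

text \<open>Only the cuts at the atoms \<open>tt\<close> and \<open>ff\<close> preserve joins and complements.\<close>

lemma Bcut_sup: "b \<in> {tt, ff} \<Longrightarrow> Bcut (sup l m) b = Bcut l b \<union> Bcut m b"
  by (auto simp: Bcut_tt Bcut_ff)

lemma Bcut_Sup: "b \<in> {tt, ff} \<Longrightarrow> Bcut (Sup F) b = (\<Union>l\<in>F. Bcut l b)"
  by (auto simp: Bcut_tt Bcut_ff fst_Sup snd_Sup)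

lemma Bcut_uminus: "b \<in> {tt, ff} \<Longrightarrow> Bcut (- l) b = - Bcut l b"
  by (auto simp: Bcut_tt Bcut_ff)

definition Bpair :: "'a set \<Rightarrow> 'a set \<Rightarrow> 'a \<Rightarrow> B4" where
  "Bpair A B = (\<lambda>x. (x \<in> A, x \<in> B))"

lemma Bcut_Bpair [simp]: "Bcut (Bpair A B) tt = A" "Bcut (Bpair A B) ff = B"
  by (simp_all add: Bcut_tt Bcut_ff Bpair_def)

lemma Bpair_Bcut [simp]: "Bpair (Bcut l tt) (Bcut l ff) = l"
  by (simp add: Bpair_def Bcut_tt Bcut_ff)

lemma eq_iff_Bcut: "l = m \<longleftrightarrow> Bcut l tt = Bcut m tt \<and> Bcut l ff = Bcut m ff"
  by (metis Bpair_Bcut)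

lemma all_Bcut_pairs: "(\<forall>l. P (Bcut l tt) (Bcut l ff)) \<longleftrightarrow> (\<forall>A B. P A B)"
  by (metis Bcut_Bpair)

lemma
  assumes "Btopology \<tau>"
  shows Btopology_const: "(\<lambda>_. c) \<in> \<tau>"
    and Btopology_Sup: "F \<subseteq> \<tau> \<Longrightarrow> Sup F \<in> \<tau>"
    and Btopology_inf: "l \<in> \<tau> \<Longrightarrow> m \<in> \<tau> \<Longrightarrow> inf l m \<in> \<tau>"
  using assms unfolding Btopology_def by blast+

lemma Bpair_mem:
  assumes \<tau>: "Btopology \<tau>" and A: "A \<in> Blevel \<tau> tt" and B: "B \<in> Blevel \<tau> ff"
  shows "Bpair A B \<in> \<tau>"
proof -
  obtain l m where l: "l \<in> \<tau>" "A = Bcut l tt" and m: "m \<in> \<tau>" "B = Bcut m ff"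
    using A B unfolding Blevel_def by blast
  have "sup (inf l (\<lambda>_. tt)) (inf m (\<lambda>_. ff)) \<in> \<tau>"
    using Btopology_Sup[OF \<tau>, of "{inf l (\<lambda>_. tt), inf m (\<lambda>_. ff)}"]
      Btopology_inf[OF \<tau>] Btopology_const[OF \<tau>] l m by simp
  moreover have "sup (inf l (\<lambda>_. tt)) (inf m (\<lambda>_. ff)) = Bpair A B"
    by (auto simp: fun_eq_iff prod_eq_iff Bpair_def Bcut_tt Bcut_ff l m)
  ultimately show ?thesis
    by simp
qed

lemma mem_iff_Bcut_mem_Blevel:
  "Btopology \<tau> \<Longrightarrow> l \<in> \<tau> \<longleftrightarrow> Bcut l tt \<in> Blevel \<tau> tt \<and> Bcut l ff \<in> Blevel \<tau> ff"
  using Bpair_mem[of \<tau> "Bcut l tt" "Bcut l ff"] by (auto simp: Blevel_def)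

lemma Bclosed_iff:
  "Btopology \<tau> \<Longrightarrow> Bclosed \<tau> g \<longleftrightarrow> - Bcut g tt \<in> Blevel \<tau> tt \<and> - Bcut g ff \<in> Blevel \<tau> ff"
  unfolding Bclosed_def by (simp add: mem_iff_Bcut_mem_Blevel Bcut_uminus)

lemma Bcut_mem_Blevel: "l \<in> \<tau> \<Longrightarrow> Bcut l b \<in> Blevel \<tau> b"
  unfolding Blevel_def by (rule imageI)

lemma is_topology_Blevel:
  assumes \<tau>: "Btopology \<tau>" and b: "b \<in> {tt, ff}"
  shows "is_topology (Blevel \<tau> b)"
  unfolding is_topology_def
proof (intro conjI ballI allI impI)
  show "UNIV \<in> Blevel \<tau> b"
    using Bcut_mem_Blevel[OF Btopology_const[OF \<tau>, of top]] by (simp only: Bcut_top)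
next
  fix S
  assume S: "S \<subseteq> Blevel \<tau> b"
  let ?F = "{l \<in> \<tau>. Bcut l b \<in> S}"
  have "(\<lambda>l. Bcut l b) ` ?F = S"
  proof (intro equalityI subsetI)
    fix U
    assume "U \<in> S"
    with S obtain l where "l \<in> \<tau>" "U = Bcut l b"
      unfolding Blevel_def by blast
    with \<open>U \<in> S\<close> show "U \<in> (\<lambda>l. Bcut l b) ` ?F"
      by blast
  qed auto
  then have "Bcut (Sup ?F) b = \<Union>S"
    by (simp add: Bcut_Sup[OF b])
  moreover have "Sup ?F \<in> \<tau>"
    by (rule Btopology_Sup[OF \<tau>]) (rule Collect_restrict)
  then have "Bcut (Sup ?F) b \<in> Blevel \<tau> b"
    by (rule Bcut_mem_Blevel)
  ultimately show "\<Union>S \<in> Blevel \<tau> b"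
    by simp
next
  fix U V
  assume "U \<in> Blevel \<tau> b" "V \<in> Blevel \<tau> b"
  then obtain l m where "l \<in> \<tau>" "m \<in> \<tau>" "U = Bcut l b" "V = Bcut m b"
    unfolding Blevel_def by blast
  then show "U \<inter> V \<in> Blevel \<tau> b"
    using Bcut_mem_Blevel[OF Btopology_inf[OF \<tau>], of l m b] by (simp add: Bcut_inf)
qed

lemma Bclosed_obtains_Bcut:
  assumes \<tau>: "Btopology \<tau>" and b: "b \<in> {tt, ff}" and M: "- M \<in> Blevel \<tau> b"
  obtains m where "Bclosed \<tau> m" and "Bcut m b = M" and "\<forall>x. - b \<le> m x"
  \<comment> \<open>the last clause says that the other cut of \<open>m\<close> is \<open>UNIV\<close>\<close>
proof -
  have empty: "- UNIV \<in> Blevel \<tau> c" if "c \<in> {tt, ff}" for c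
    using is_topology_Blevel[OF \<tau> that] unfolding is_topology_def
    by (metis Compl_UNIV_eq Union_empty empty_subsetI)
  from b show thesis
  proof
    assume "b = tt"
    show thesis
    proof (rule that[of "Bpair M UNIV"])
      show "Bclosed \<tau> (Bpair M UNIV)"
        using M empty[of ff] \<open>b = tt\<close> by (simp add: Bclosed_iff[OF \<tau>])
    qed (auto simp: \<open>b = tt\<close> Bpair_def Bcut_tt less_eq_prod_def)
  next
    assume "b \<in> {ff}"
    then have "b = ff"
      by simp
    show thesis
    proof (rule that[of "Bpair UNIV M"])
      show "Bclosed \<tau> (Bpair UNIV M)"
        using M empty[of tt] \<open>b = ff\<close> by (simp add: Bclosed_iff[OF \<tau>])
    qed (auto simp: \<open>b = ff\<close> Bpair_def Bcut_ff less_eq_prod_def)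
  qed
qed

lemma Bclosed_Bcut_closed:
  "Bclosed \<tau> m \<Longrightarrow> b \<in> {tt, ff} \<Longrightarrow> - Bcut m b \<in> Blevel \<tau> b"
  unfolding Bclosed_def using Bcut_mem_Blevel[of "- m" \<tau> b] by (simp add: Bcut_uminus)

lemma all_Bclosed2_Bcut_iff:
  assumes \<tau>: "Btopology \<tau>" and b: "b \<in> {tt, ff}"
  shows "(\<forall>m1 m2. Bclosed \<tau> m1 \<longrightarrow> Bclosed \<tau> m2 \<longrightarrow> P (Bcut m1 b) (Bcut m2 b)) \<longleftrightarrow>
    (\<forall>M N. - M \<in> Blevel \<tau> b \<longrightarrow> - N \<in> Blevel \<tau> b \<longrightarrow> P M N)"
proof (intro iffI allI impI)
  fix M N
  assume P: "\<forall>m1 m2. Bclosed \<tau> m1 \<longrightarrow> Bclosed \<tau> m2 \<longrightarrow> P (Bcut m1 b) (Bcut m2 b)"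
    and "- M \<in> Blevel \<tau> b" "- N \<in> Blevel \<tau> b"
  then obtain m1 m2 where "Bclosed \<tau> m1" "Bcut m1 b = M" "Bclosed \<tau> m2" "Bcut m2 b = N"
    using Bclosed_obtains_Bcut[OF \<tau> b] by metis
  with P show "P M N"
    by blast
qed (use Bclosed_Bcut_closed[OF _ b] in blast)

lemma Bpoint_le_iff: "Bpoint x \<le> g \<longleftrightarrow> g x = top"
  by (auto simp: Bpoint_def le_fun_def top_unique)

lemma Bcut_Bclosure_Bpoint:
  assumes \<tau>: "Btopology \<tau>" and b: "b \<in> {tt, ff}"
  shows "Bcut (Bclosure \<tau> (Bpoint x)) b = point_closure (Blevel \<tau> b) x"
proof -
  have "(\<lambda>g. Bcut g b) ` {g. Bclosed \<tau> g \<and> Bpoint x \<le> g} = {C. - C \<in> Blevel \<tau> b \<and> x \<in> C}"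
  proof (intro equalityI subsetI)
    fix C
    assume "C \<in> (\<lambda>g. Bcut g b) ` {g. Bclosed \<tau> g \<and> Bpoint x \<le> g}"
    then obtain g where "Bclosed \<tau> g" "g x = top" "C = Bcut g b"
      by (auto simp: Bpoint_le_iff)
    then show "C \<in> {C. - C \<in> Blevel \<tau> b \<and> x \<in> C}"
      using Bclosed_Bcut_closed[OF _ b] by (simp add: Bcut_def)
  next
    fix C
    assume "C \<in> {C. - C \<in> Blevel \<tau> b \<and> x \<in> C}"
    then have C: "- C \<in> Blevel \<tau> b" "x \<in> C"
      by simp_all
    then obtain m where m: "Bclosed \<tau> m" "Bcut m b = C" "\<forall>y. - b \<le> m y"
      using Bclosed_obtains_Bcut[OF \<tau> b] by metis
    have "b \<le> m x" "- b \<le> m x"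
      using m C by (auto simp: Bcut_def)
    then have "Bpoint x \<le> m"
      unfolding Bpoint_le_iff by (metis sup_compl_top sup_least top_unique)
    with m show "C \<in> (\<lambda>g. Bcut g b) ` {g. Bclosed \<tau> g \<and> Bpoint x \<le> g}"
      by blast
  qed
  then show ?thesis
    unfolding Bclosure_def point_closure_def Bcut_Inf by simp
qed

lemma Bsub_eq: "Bsub g m = (Bcut g tt \<subseteq> Bcut m tt, Bcut g ff \<subseteq> Bcut m ff)"
  by (auto simp: Bsub_def bimp_def Bcut_tt Bcut_ff prod_eq_iff fst_INF snd_INF)

lemma Bsub_const_iff: "(\<forall>c. Bsub g (\<lambda>_. c) = c) \<longleftrightarrow> Bcut g tt \<noteq> {} \<and> Bcut g ff \<noteq> {}"
  by (force simp: Bsub_eq Bcut_tt Bcut_ff prod_eq_iff)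

lemma Bsub_sup_iff:
  "Bsub g (sup m1 m2) = sup (Bsub g m1) (Bsub g m2) \<longleftrightarrow>
    (\<forall>b\<in>{tt, ff}. Bcut g b \<subseteq> Bcut m1 b \<union> Bcut m2 b \<longrightarrow> Bcut g b \<subseteq> Bcut m1 b \<or> Bcut g b \<subseteq> Bcut m2 b)"
  by (auto simp: Bsub_eq Bcut_sup)

lemma Birreducible_iff:
  assumes \<tau>: "Btopology \<tau>"
  shows "Birreducible \<tau> g \<longleftrightarrow>
    irreducible_closed (Blevel \<tau> tt) (Bcut g tt) \<and> irreducible_closed (Blevel \<tau> ff) (Bcut g ff)"
proof -
  have split_iff: "(\<forall>m1 m2. Bclosed \<tau> m1 \<longrightarrow> Bclosed \<tau> m2 \<longrightarrow>
      C \<subseteq> Bcut m1 b \<union> Bcut m2 b \<longrightarrow> C \<subseteq> Bcut m1 b \<or> C \<subseteq> Bcut m2 b) \<longleftrightarrow>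
    (\<forall>M N. - M \<in> Blevel \<tau> b \<longrightarrow> - N \<in> Blevel \<tau> b \<longrightarrow> C \<subseteq> M \<union> N \<longrightarrow> C \<subseteq> M \<or> C \<subseteq> N)"
    if b: "b \<in> {tt, ff}" for b C
    by (rule all_Bclosed2_Bcut_iff[OF \<tau> b])
  have "(\<forall>m1 m2. Bclosed \<tau> m1 \<longrightarrow> Bclosed \<tau> m2 \<longrightarrow>
      Bsub g (sup m1 m2) = sup (Bsub g m1) (Bsub g m2)) \<longleftrightarrow>
    (\<forall>b\<in>{tt, ff}. \<forall>m1 m2. Bclosed \<tau> m1 \<longrightarrow> Bclosed \<tau> m2 \<longrightarrow>
      Bcut g b \<subseteq> Bcut m1 b \<union> Bcut m2 b \<longrightarrow> Bcut g b \<subseteq> Bcut m1 b \<or> Bcut g b \<subseteq> Bcut m2 b)"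
    (is "?distributive \<longleftrightarrow> _")
    unfolding Bsub_sup_iff by blast
  also have "\<dots> \<longleftrightarrow> (\<forall>b\<in>{tt, ff}. \<forall>M N. - M \<in> Blevel \<tau> b \<longrightarrow> - N \<in> Blevel \<tau> b \<longrightarrow>
      Bcut g b \<subseteq> M \<union> N \<longrightarrow> Bcut g b \<subseteq> M \<or> Bcut g b \<subseteq> N)"
    (is "_ \<longleftrightarrow> ?cutwise")
    by (rule ball_cong[OF refl split_iff])
  finally have distrib: "?distributive \<longleftrightarrow> ?cutwise" .
  show ?thesis
    unfolding Birreducible_def distrib Bsub_const_iff
    unfolding irreducible_closed_def Bclosed_iff[OF \<tau>] by auto
qed

section \<open>The conditions of the theorem on cuts\<close>

lemma le_iff_Bcut: "g \<le> m \<longleftrightarrow> Bcut g tt \<subseteq> Bcut m tt \<and> Bcut g ff \<subseteq> Bcut m ff"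
  by (auto simp: Bcut_tt Bcut_ff le_fun_def less_eq_prod_def)

lemma Bscal_le_iff: "b \<in> {tt, ff} \<Longrightarrow> Bscal b g \<le> m \<longleftrightarrow> Bcut g b \<subseteq> Bcut m b"
  by (auto simp: Bscal_def Bcut_def le_fun_def tt_def ff_def less_eq_prod_def)

lemma nowhere_bot_iff: "(\<forall>z. m z \<noteq> bot) \<longleftrightarrow> Bcut m tt \<union> Bcut m ff = UNIV"
  by (auto simp: Bcut_tt Bcut_ff prod_eq_iff)

lemma nowhere_top_iff: "(\<forall>z. m z \<noteq> top) \<longleftrightarrow> Bcut m tt \<inter> Bcut m ff = {}"
  by (auto simp: Bcut_tt Bcut_ff prod_eq_iff)

lemma all_Bclosed_Bcuts_iff:
  assumes \<tau>: "Btopology \<tau>"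
  shows "(\<forall>m. Bclosed \<tau> m \<longrightarrow> P (Bcut m tt) (Bcut m ff)) \<longleftrightarrow>
    (\<forall>M1 M2. - M1 \<in> Blevel \<tau> tt \<longrightarrow> - M2 \<in> Blevel \<tau> ff \<longrightarrow> P M1 M2)"
  unfolding Bclosed_iff[OF \<tau>]
  using all_Bcut_pairs[where
      P = "\<lambda>M1 M2. - M1 \<in> Blevel \<tau> tt \<longrightarrow> - M2 \<in> Blevel \<tau> ff \<longrightarrow> P M1 M2"]
  by (simp add: imp_conjL)

lemma Bcover_condition_iff:
  assumes \<tau>: "Btopology \<tau>"
  shows "(\<forall>m. Bclosed \<tau> m \<and> (\<forall>z. m z \<noteq> bot) \<longrightarrow> Bscal tt g \<le> m \<or> Bscal ff g \<le> m) \<longleftrightarrow>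
    (\<forall>M1 M2. - M1 \<in> Blevel \<tau> tt \<longrightarrow> - M2 \<in> Blevel \<tau> ff \<longrightarrow>
       M1 \<union> M2 = UNIV \<longrightarrow> Bcut g tt \<subseteq> M1 \<or> Bcut g ff \<subseteq> M2)"
  using all_Bclosed_Bcuts_iff[OF \<tau>, where
      P = "\<lambda>M1 M2. M1 \<union> M2 = UNIV \<longrightarrow> Bcut g tt \<subseteq> M1 \<or> Bcut g ff \<subseteq> M2"]
  by (simp add: nowhere_bot_iff Bscal_le_iff imp_conjL)

lemma Bseparation_condition_iff:
  assumes \<tau>: "Btopology \<tau>"
  shows "(\<forall>m. Bclosed \<tau> m \<and> (\<forall>z. m z \<noteq> top) \<longrightarrow> \<not> g \<le> m) \<longleftrightarrow>
    (\<forall>M1 M2. - M1 \<in> Blevel \<tau> tt \<longrightarrow> - M2 \<in> Blevel \<tau> ff \<longrightarrow>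
       M1 \<inter> M2 = {} \<longrightarrow> \<not> (Bcut g tt \<subseteq> M1 \<and> Bcut g ff \<subseteq> M2))"
  using all_Bclosed_Bcuts_iff[OF \<tau>, where
      P = "\<lambda>M1 M2. M1 \<inter> M2 = {} \<longrightarrow> \<not> (Bcut g tt \<subseteq> M1 \<and> Bcut g ff \<subseteq> M2)"]
  by (simp add: nowhere_top_iff le_iff_Bcut imp_conjL)

theorem mainTheorem10:
  fixes \<tau> :: "('a \<Rightarrow> B4) set"
  assumes "Btopology \<tau>"
  shows "B_d_sober \<tau> \<longleftrightarrow>
    (\<forall>g. Birreducible \<tau> g
       \<and> (\<forall>m. Bclosed \<tau> m \<and> (\<forall>z. m z \<noteq> bot) \<longrightarrow> Bscal tt g \<le> m \<or> Bscal ff g \<le> m)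
       \<and> (\<forall>m. Bclosed \<tau> m \<and> (\<forall>z. m z \<noteq> top) \<longrightarrow> \<not> g \<le> m)
       \<longrightarrow> (\<exists>!x. g = Bclosure \<tau> (Bpoint x)))"
proof -
  let ?T1 = "Blevel \<tau> tt" and ?T2 = "Blevel \<tau> ff"
  have closure: "Bcut (Bclosure \<tau> (Bpoint x)) tt = point_closure ?T1 x"
    "Bcut (Bclosure \<tau> (Bpoint x)) ff = point_closure ?T2 x" for x
    using Bcut_Bclosure_Bpoint[OF assms] by simp_all
  have "B_d_sober \<tau> \<longleftrightarrow> (\<forall>C1 C2. d_irreducible_pair ?T1 ?T2 C1 C2 \<longrightarrow>
      (\<exists>!x. C1 = point_closure ?T1 x \<and> C2 = point_closure ?T2 x))"
    unfolding B_d_sober_def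
    by (rule d_sober_iff_d_irreducible_pairs_point_closures) (simp_all add: is_topology_Blevel assms)
  also have "\<dots> \<longleftrightarrow> (\<forall>g. d_irreducible_pair ?T1 ?T2 (Bcut g tt) (Bcut g ff) \<longrightarrow>
      (\<exists>!x. Bcut g tt = point_closure ?T1 x \<and> Bcut g ff = point_closure ?T2 x))"
    by (rule all_Bcut_pairs[symmetric])
  finally show ?thesis
    unfolding Birreducible_iff[OF assms] Bcover_condition_iff[OF assms]
      Bseparation_condition_iff[OF assms] d_irreducible_pair_def
      eq_iff_Bcut[where m = "Bclosure \<tau> (Bpoint _)"] closure
    by (simp only: conj_assoc)
qed

end
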